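(* Let $d\ge 1$ and let $(X_1,\ldots,X_d,Y)$ be a random vector with continuous marginal distribution functions $F_{X_1},\ldots,F_{X_d},F_Y$ and $(d+1)$-dimensional copula $C$. Let $(U_1,\ldots,U_d,V)$ be a random vector with standard uniform marginals and copula $C$. Fix $\boldsymbol{\alpha}=(\alpha_1,\ldots,\alpha_d)\in[0,1)^d$ with $C(\boldsymbol{\alpha},1)<1$, and let $A_{\boldsymbol U}=\{\exists\, i: U_i>\alpha_i\}$ and $A_{\boldsymbol X}=\{\exists\, i: X_i>\mathrm{VaR}_{\alpha_i}(X_i)\}$. Then: (a) the distribution function of $V$ conditional on $A_{\boldsymbol U}$ is $$F_{V|A_{\boldsymbol U}}(v)=\frac{v-C(\boldsymbol{\alpha},v)}{1-C(\boldsymbol{\alpha},1)},\qquad v\in[0,1],$$ and this function is a distortion function; (b) the distribution function of $Y$ conditional on $A_{\boldsymbol X}$ is $F_{Y|A_{\boldsymbol X}}(y)=F_{V|A_{\boldsymbol U}}(F_Y(y))$ for all $y\in\mathbb{R}$.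
   Context: For a $(d+1)$-dimensional copula $C$, write $C(\boldsymbol{\alpha},v)=C(\alpha_1,\ldots,\alpha_d,v)$. For a random variable $Z$ with distribution function $F$, $F^{-1}(t)=\inf\{x\in\mathbb{R}:F(x)\ge t\}$ and $\mathrm{VaR}_t(Z)=F^{-1}(t)$. A distortion function is a nondecreasing function $h:[0,1]\to[0,1]$ with $h(0)=0$ and $h(1)=1$. *)

theory Defs
  imports "HOL-Probability.Probability"
begin

(* Points of [0,1]^(d+1) are represented as functions u :: nat => real, where
   coordinates 0..d-1 are the "alpha"/U/X coordinates and coordinate d is the
   v/V/Y coordinate; coordinates > d are ignored.  C(alpha, v) is C (alpha(d := v)). *)

definition dfun :: "'a measure \<Rightarrow> ('a \<Rightarrow> real) \<Rightarrow> real \<Rightarrow> real" where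
  "dfun M Z = cdf (distr M borel Z)"

definition is_copula :: "nat \<Rightarrow> ((nat \<Rightarrow> real) \<Rightarrow> real) \<Rightarrow> bool" where
  "is_copula d C \<longleftrightarrow>
     (\<exists>N. prob_space N \<and> sets N = sets (PiM {..d} (\<lambda>_. borel :: real measure)) \<and>
          (\<forall>i\<le>d. \<forall>t\<in>{0..1}. measure N {x \<in> space N. x i \<le> t} = t) \<and>
          (\<forall>u. (\<forall>i\<le>d. u i \<in> {0..1}) \<longrightarrow>
                C u = measure N {x \<in> space N. \<forall>i\<le>d. x i \<le> u i}))"

definition has_copula ::
  "'a measure \<Rightarrow> nat \<Rightarrow> (nat \<Rightarrow> 'a \<Rightarrow> real) \<Rightarrow> ('a \<Rightarrow> real) \<Rightarrow> ((nat \<Rightarrow> real) \<Rightarrow> real) \<Rightarrow> bool" where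
  "has_copula M d X Y C \<longleftrightarrow> is_copula d C \<and>
     (\<forall>x y. measure M {\<omega> \<in> space M. (\<forall>i<d. X i \<omega> \<le> x i) \<and> Y \<omega> \<le> y}
            = C (\<lambda>i. if i < d then dfun M (X i) (x i) else dfun M Y y))"

definition cond_dfun :: "'a measure \<Rightarrow> 'a set \<Rightarrow> ('a \<Rightarrow> real) \<Rightarrow> real \<Rightarrow> real" where
  "cond_dfun M A Z z = measure M ({\<omega> \<in> space M. Z \<omega> \<le> z} \<inter> A) / measure M A"

(* Value-at-Risk VaR_t(Z) = F^{-1}(t) = inf {x. F(x) >= t}, taken in the extended
   reals so that VaR_0(Z) = -infinity as with the usual convention inf R = -infinity. *)
definition VaR :: "'a measure \<Rightarrow> ('a \<Rightarrow> real) \<Rightarrow> real \<Rightarrow> ereal" where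
  "VaR M Z t = Inf {ereal x | x. dfun M Z x \<ge> t}"

definition distortion :: "(real \<Rightarrow> real) \<Rightarrow> bool" where
  "distortion h \<longleftrightarrow> mono_on {0..1} h \<and> h ` {0..1} \<subseteq> {0..1} \<and> h 0 = 0 \<and> h 1 = 1"

end

theory Submission
  imports Defs
begin

(* Let B be the complement of the conditioning event and G(t) = C(alpha, t). In both models
   P(B and Y <= y) = G(F_Y(y)): for (U, V) because the marginals are uniform, for (X, Y)
   because a continuous F_{X_i} takes the value alpha_i at VaR_{alpha_i}(X_i); if some
   alpha_i = 0, then VaR_0 = -infinity makes B empty and G vanishes since C is grounded.
   Copulas are 1-Lipschitz in each coordinate, so letting y tend to infinity gives P(B) = G(1),
   whence the conditional distribution function on the complement of B is
   (F_Y - G o F_Y) / (1 - G(1)). The same Lipschitz property makes v - G(v) nondecreasing,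
   which is the distortion property. *)

lemma dfun_eq_measure:
  "Z \<in> borel_measurable M \<Longrightarrow> dfun M Z x = measure M {\<omega>\<in>space M. Z \<omega> \<le> x}"
  unfolding dfun_def cdf_def
  by (subst measure_distr) (auto simp: vimage_def Int_def conj_commute intro!: arg_cong[where f="measure M"])

lemma dfun_in_unit_interval:
  assumes "prob_space M" "Z \<in> borel_measurable M"
  shows "dfun M Z z \<in> {0..1}"
proof -
  interpret real_distribution "distr M borel Z"
    using assms prob_space.real_distribution_distr by blast
  show ?thesis unfolding dfun_def using cdf_nonneg cdf_bounded_prob by simp
qed

lemma dfun_uniform:
  assumes "distr N borel Z = uniform_measure lborel {0..1::real}" "t \<in> {0..1}"
  shows "dfun N Z t = t"
proof -
  have "dfun N Z t = measure (uniform_measure lborel {0..1::real}) {..t}"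
    unfolding dfun_def cdf_def assms(1) ..
  also have "\<dots> = measure lborel ({0..1} \<inter> {..t}) / measure lborel {0..1::real}"
    by (subst measure_uniform_measure) auto
  also have "{0..1} \<inter> {..t} = {0..t}" using assms(2) by auto
  finally show ?thesis using assms(2) by simp
qed

lemma VaR_zero: "VaR M Z 0 = -\<infinity>"
proof -
  have "VaR M Z 0 \<le> ereal x" for x
    unfolding VaR_def by (rule Inf_lower) (auto simp: dfun_def cdf_def)
  then show ?thesis by (rule ereal_bot)
qed

lemma VaR_eq_ereal_if_continuous:
  assumes M: "prob_space M" and Z: "Z \<in> borel_measurable M"
    and cont: "continuous_on UNIV (dfun M Z)" and a: "0 < a" "a < 1"
  obtains q where "VaR M Z a = ereal q" "dfun M Z q = a"
proof -
  interpret real_distribution "distr M borel Z"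
    using M Z prob_space.real_distribution_distr by blast
  let ?F = "dfun M Z"
  have F: "?F = cdf (distr M borel Z)" by (simp add: dfun_def)
  have "eventually (\<lambda>x. ?F x > a) at_top"
    using order_tendstoD(1)[OF cdf_lim_at_top_prob] a by (simp add: F)
  then obtain c where c: "?F c > a" unfolding eventually_at_top_linorder by auto
  have "eventually (\<lambda>x. ?F x < a) at_bot"
    using order_tendstoD(2)[OF cdf_lim_at_bot] a by (simp add: F)
  then obtain b where b: "?F b < a" unfolding eventually_at_bot_linorder by auto
  define S where "S = {x. a \<le> ?F x}"
  have "S \<noteq> {}" using c unfolding S_def by (auto intro: less_imp_le)
  moreover have b_le: "b \<le> x" if "x \<in> S" for x
    using that b cdf_nondecreasing[of x b] by (force simp: S_def F)
  then have bdd: "bdd_below S" by (rule bdd_belowI)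
  moreover have "closed S" unfolding S_def by (intro closed_Collect_le continuous_on_const cont)
  ultimately have qS: "Inf S \<in> S" by (rule closed_contains_Inf)
  \<comment> \<open>F reaches a on [b, Inf S] by the intermediate value theorem, and Inf S is the least point
    with F \<ge> a.\<close>
  have "\<exists>x. b \<le> x \<and> x \<le> Inf S \<and> ?F x = a"
    using b qS b_le[OF qS] by (intro IVT' continuous_on_subset[OF cont]) (auto simp: S_def)
  then obtain x where x: "x \<le> Inf S" "?F x = a" by blast
  then have "x = Inf S" using cInf_lower[OF _ bdd, of x] by (simp add: S_def)
  moreover have "VaR M Z a = Inf (ereal ` S)"
    unfolding VaR_def S_def by (auto intro!: arg_cong[where f=Inf])
  ultimately show ?thesis
    using that x ereal_Inf'[OF bdd \<open>S \<noteq> {}\<close>] by metis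
qed

lemma (in prob_space) tendsto_prob_Int_le_at_top:
  fixes Y :: "'a \<Rightarrow> real"
  assumes "B \<in> events" "Y \<in> borel_measurable M"
  shows "((\<lambda>y. prob (B \<inter> {\<omega>\<in>space M. Y \<omega> \<le> y})) \<longlongrightarrow> prob B) at_top"
proof (rule tendsto_at_topI_sequentially_real)
  show "mono (\<lambda>y. prob (B \<inter> {\<omega>\<in>space M. Y \<omega> \<le> y}))"
    using assms by (intro monoI finite_measure_mono) auto
  have "(\<Union>n. B \<inter> {\<omega>\<in>space M. Y \<omega> \<le> real n}) = B"
    using sets.sets_into_space[OF assms(1)] by (auto intro: real_nat_ceiling_ge)
  moreover have "(\<lambda>n. prob (B \<inter> {\<omega>\<in>space M. Y \<omega> \<le> real n}))
      \<longlonglongrightarrow> prob (\<Union>n. B \<inter> {\<omega>\<in>space M. Y \<omega> \<le> real n})"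
    using assms by (intro finite_Lim_measure_incseq) (auto simp: incseq_def)
  ultimately show "(\<lambda>n. prob (B \<inter> {\<omega>\<in>space M. Y \<omega> \<le> real n})) \<longlonglongrightarrow> prob B"
    by simp
qed

lemma is_copulaE:
  assumes "is_copula d C"
  obtains P where "prob_space P" "\<And>i. i \<le> d \<Longrightarrow> (\<lambda>x. x i) \<in> borel_measurable P"
    "\<And>i t. i \<le> d \<Longrightarrow> t \<in> {0..1} \<Longrightarrow> measure P {x \<in> space P. x i \<le> t} = t"
    "\<And>u. \<forall>i\<le>d. u i \<in> {0..1} \<Longrightarrow> C u = measure P {x \<in> space P. \<forall>i\<le>d. x i \<le> u i}"
proof -
  obtain P where P: "prob_space P" and sets: "sets P = sets (PiM {..d} (\<lambda>_. borel :: real measure))"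
    and marg: "\<forall>i\<le>d. \<forall>t\<in>{0..1}. measure P {x \<in> space P. x i \<le> t} = t"
    and rep: "\<forall>u. (\<forall>i\<le>d. u i \<in> {0..1}) \<longrightarrow> C u = measure P {x \<in> space P. \<forall>i\<le>d. x i \<le> u i}"
    using assms unfolding is_copula_def by blast
  have "(\<lambda>x. x i) \<in> borel_measurable P" if "i \<le> d" for i
    unfolding measurable_cong_sets[OF sets refl] using that by (intro measurable_component_singleton) simp
  then show ?thesis using marg rep by (intro that[OF P]) auto
qed

lemma is_copula_cong:
  assumes "is_copula d C" "\<forall>i\<le>d. u i \<in> {0..1}" "\<forall>i\<le>d. u' i = u i"
  shows "C u' = C u"
proof -
  obtain P where "\<forall>u. (\<forall>i\<le>d. u i \<in> {0..1}) \<longrightarrow> C u = measure P {x \<in> space P. \<forall>i\<le>d. x i \<le> u i}"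
    using assms(1) unfolding is_copula_def by blast
  then show ?thesis using assms(2,3) by simp
qed

lemma copula_grounded:
  assumes "is_copula d C" "\<forall>i\<le>d. u i \<in> {0..1}" "j \<le> d" "u j = 0"
  shows "C u = 0"
proof -
  obtain P where "prob_space P" and [measurable]: "\<And>i. i \<le> d \<Longrightarrow> (\<lambda>x. x i) \<in> borel_measurable P"
    and marg: "\<And>i t. i \<le> d \<Longrightarrow> t \<in> {0..1} \<Longrightarrow> measure P {x \<in> space P. x i \<le> t} = t"
    and rep: "\<And>u. \<forall>i\<le>d. u i \<in> {0..1} \<Longrightarrow> C u = measure P {x \<in> space P. \<forall>i\<le>d. x i \<le> u i}"
    using assms(1) by (rule is_copulaE) blast
  interpret prob_space P by fact
  have "C u \<le> prob {x \<in> space P. x j \<le> 0}"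
    unfolding rep[OF assms(2)] using assms(3,4) by (intro finite_measure_mono) auto
  also have "\<dots> = 0" using marg assms(3) by simp
  finally show ?thesis using rep[OF assms(2)] by (simp add: antisym)
qed

lemma copula_mono_Lipschitz_coord:
  assumes "is_copula d C" "k \<le> d" "\<forall>i\<le>d. i \<noteq> k \<longrightarrow> u i \<in> {0..1}"
    and "0 \<le> t" "t \<le> s" "s \<le> 1"
  shows "C (u(k := t)) \<le> C (u(k := s))" "C (u(k := s)) - C (u(k := t)) \<le> s - t"
proof -
  obtain P where "prob_space P" and [measurable]: "\<And>i. i \<le> d \<Longrightarrow> (\<lambda>x. x i) \<in> borel_measurable P"
    and marg: "\<And>i t. i \<le> d \<Longrightarrow> t \<in> {0..1} \<Longrightarrow> measure P {x \<in> space P. x i \<le> t} = t"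
    and rep: "\<And>u. \<forall>i\<le>d. u i \<in> {0..1} \<Longrightarrow> C u = measure P {x \<in> space P. \<forall>i\<le>d. x i \<le> u i}"
    using assms(1) by (rule is_copulaE) blast
  interpret prob_space P by fact
  define Q where "Q r = {x \<in> space P. \<forall>i\<le>d. x i \<le> (u(k := r)) i}" for r
  define K where "K r = {x \<in> space P. x k \<le> r}" for r
  have [measurable]: "Q r \<in> events" "K r \<in> events" for r
    unfolding Q_def K_def using assms(2) by measurable
  have CQ: "C (u(k := r)) = prob (Q r)" if "r \<in> {0..1}" for r
    unfolding Q_def using assms(3) that by (intro rep) auto
  have "Q t \<subseteq> Q s"
    unfolding Q_def using assms(5) by (auto simp: fun_upd_apply intro: order_trans)
  have "Q s - Q t \<subseteq> K s - K t"
  proof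
    fix x assume x: "x \<in> Q s - Q t"
    then obtain i where "i \<le> d" "x i > (u(k := t)) i" unfolding Q_def by (auto simp: not_le)
    moreover have "x i \<le> (u(k := s)) i" using x \<open>i \<le> d\<close> unfolding Q_def by blast
    ultimately have "i = k" by (cases "i = k") auto
    then show "x \<in> K s - K t" using x assms(2) \<open>x i > (u(k := t)) i\<close> unfolding Q_def K_def by auto
  qed
  have "K t \<subseteq> K s" unfolding K_def using assms(5) by auto
  have "C (u(k := s)) - C (u(k := t)) = prob (Q s - Q t)"
    using CQ assms(4-6) finite_measure_Diff[OF _ _ \<open>Q t \<subseteq> Q s\<close>] by simp
  also have "\<dots> \<le> prob (K s - K t)"
    using \<open>Q s - Q t \<subseteq> K s - K t\<close> by (intro finite_measure_mono) auto
  also have "\<dots> = s - t"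
    using marg assms(2,4-6) finite_measure_Diff[OF _ _ \<open>K t \<subseteq> K s\<close>] by (simp add: K_def)
  finally show "C (u(k := s)) - C (u(k := t)) \<le> s - t" .
  show "C (u(k := t)) \<le> C (u(k := s))"
    using CQ assms(4-6) finite_measure_mono[OF \<open>Q t \<subseteq> Q s\<close>] by simp
qed

lemma continuous_on_copula_coord:
  assumes "is_copula d C" "k \<le> d" "\<forall>i\<le>d. i \<noteq> k \<longrightarrow> u i \<in> {0..1}"
  shows "continuous_on {0..1} (\<lambda>t. C (u(k := t)))"
proof (rule lipschitz_on_continuous_on)
  have "dist (C (u(k := s))) (C (u(k := t))) \<le> dist s t" if "s \<in> {0..1}" "t \<in> {0..1}" for s t
    using copula_mono_Lipschitz_coord[OF assms, of s t] copula_mono_Lipschitz_coord[OF assms, of t s] that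
    by (cases "s \<le> t") (auto simp: dist_real_def)
  then show "1-lipschitz_on {0..1} (\<lambda>t. C (u(k := t)))"
    by (intro lipschitz_onI) auto
qed

lemma distortion_copula_coord:
  assumes "is_copula d C" "k \<le> d" "\<forall>i\<le>d. i \<noteq> k \<longrightarrow> u i \<in> {0..1}" "C (u(k := 1)) < 1"
  shows "distortion (\<lambda>v. (v - C (u(k := v))) / (1 - C (u(k := 1))))"
proof -
  note incr = copula_mono_Lipschitz_coord[OF assms(1-3)]
  have C0: "C (u(k := 0)) = 0"
    using assms(2,3) by (intro copula_grounded[OF assms(1), of _ k]) auto
  have "v - C (u(k := v)) \<le> w - C (u(k := w))" if "0 \<le> v" "v \<le> w" "w \<le> 1" for v w
    using incr(2)[OF that] by simp
  moreover have "0 \<le> v - C (u(k := v))" if "v \<in> {0..1}" for v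
    using incr(2)[of 0 v] C0 that by simp
  ultimately show ?thesis
    unfolding distortion_def using assms(4) C0
    by (auto simp: mono_on_def divide_right_mono)
qed

lemma cond_dfun_compl:
  fixes Y :: "'a \<Rightarrow> real"
  assumes M: "prob_space M" and Y: "Y \<in> borel_measurable M" and B: "B \<in> sets M"
    and g: "continuous_on {0..1} g"
    and joint: "\<And>y. measure M (B \<inter> {\<omega>\<in>space M. Y \<omega> \<le> y}) = g (dfun M Y y)"
  shows "cond_dfun M (space M - B) Y y = (dfun M Y y - g (dfun M Y y)) / (1 - g 1)"
  \<comment> \<open>No hypothesis g 1 < 1 is needed: P(space M - B) = 1 - g 1, so both sides are x / 0 = 0 then.\<close>
proof -
  interpret prob_space M by fact
  interpret Y: real_distribution "distr M borel Y" using Y by simp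
  let ?F = "dfun M Y"
  have "((\<lambda>y. g (?F y)) \<longlongrightarrow> g 1) at_top"
    using Y.cdf_lim_at_top_prob dfun_in_unit_interval[OF M Y]
    by (intro continuous_on_tendsto_compose[OF g]) (auto simp: dfun_def)
  moreover have "((\<lambda>y. g (?F y)) \<longlongrightarrow> prob B) at_top"
    using tendsto_prob_Int_le_at_top[OF B Y] by (simp add: joint)
  ultimately have PB: "g 1 = prob B"
    by (rule tendsto_unique[rotated]) simp
  have "{\<omega>\<in>space M. Y \<omega> \<le> y} \<inter> (space M - B) =
      {\<omega>\<in>space M. Y \<omega> \<le> y} - B \<inter> {\<omega>\<in>space M. Y \<omega> \<le> y}"
    by auto
  then have "prob ({\<omega>\<in>space M. Y \<omega> \<le> y} \<inter> (space M - B)) = ?F y - g (?F y)"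
    using B Y by (simp add: finite_measure_Diff joint dfun_eq_measure)
  then show ?thesis
    unfolding cond_dfun_def using prob_compl[OF B] PB by simp
qed

lemma has_copula_measure_below:
  assumes "prob_space M" "Y \<in> borel_measurable M" "has_copula M d X Y C"
    and "\<forall>i<d. dfun M (X i) (q i) = \<alpha> i" "\<forall>i<d. \<alpha> i \<in> {0..1}"
  shows "measure M ({\<omega>\<in>space M. \<forall>i<d. X i \<omega> \<le> q i} \<inter> {\<omega>\<in>space M. Y \<omega> \<le> y})
      = C (\<alpha>(d := dfun M Y y))"
proof -
  have "measure M ({\<omega>\<in>space M. \<forall>i<d. X i \<omega> \<le> q i} \<inter> {\<omega>\<in>space M. Y \<omega> \<le> y})
      = measure M {\<omega>\<in>space M. (\<forall>i<d. X i \<omega> \<le> q i) \<and> Y \<omega> \<le> y}"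
    by (rule arg_cong[where f="measure M"]) auto
  also have "\<dots> = C (\<lambda>i. if i < d then dfun M (X i) (q i) else dfun M Y y)"
    using assms(3) unfolding has_copula_def by blast
  also have "\<dots> = C (\<alpha>(d := dfun M Y y))"
    using assms(3-5) dfun_in_unit_interval[OF assms(1,2)]
    by (intro is_copula_cong) (auto simp: has_copula_def)
  finally show ?thesis .
qed

lemma has_copula_measure_below_VaR:
  fixes X :: "nat \<Rightarrow> 'a \<Rightarrow> real"
  assumes M: "prob_space M" and X: "\<forall>i<d. X i \<in> borel_measurable M" and Y: "Y \<in> borel_measurable M"
    and cont: "\<forall>i<d. continuous_on UNIV (dfun M (X i))"
    and XC: "has_copula M d X Y C" and \<alpha>: "\<forall>i<d. \<alpha> i \<in> {0..<1}"
  shows "measure M ({\<omega>\<in>space M. \<forall>i<d. ereal (X i \<omega>) \<le> VaR M (X i) (\<alpha> i)} \<inter> {\<omega>\<in>space M. Y \<omega> \<le> y})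
      = C (\<alpha>(d := dfun M Y y))"
proof (cases "\<forall>i<d. 0 < \<alpha> i")
  case True
  have "\<exists>q. VaR M (X i) (\<alpha> i) = ereal q \<and> dfun M (X i) q = \<alpha> i" if "i < d" for i
    by (rule VaR_eq_ereal_if_continuous[OF M]) (use X cont \<alpha> True that in auto)
  then obtain q where q: "\<And>i. i < d \<Longrightarrow> VaR M (X i) (\<alpha> i) = ereal (q i) \<and> dfun M (X i) (q i) = \<alpha> i"
    by metis
  then have "{\<omega>\<in>space M. \<forall>i<d. ereal (X i \<omega>) \<le> VaR M (X i) (\<alpha> i)} = {\<omega>\<in>space M. \<forall>i<d. X i \<omega> \<le> q i}"
    by auto
  moreover have "\<forall>i<d. dfun M (X i) (q i) = \<alpha> i" "\<forall>i<d. \<alpha> i \<in> {0..1}"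
    using q \<alpha> by auto
  ultimately show ?thesis
    using has_copula_measure_below[OF M Y XC] by simp
next
  case False
  then obtain j where "j < d" "\<alpha> j = 0" using \<alpha> by force
  then have "{\<omega>\<in>space M. \<forall>i<d. ereal (X i \<omega>) \<le> VaR M (X i) (\<alpha> i)} = {}"
    by (auto simp: VaR_zero)
  moreover have "C (\<alpha>(d := dfun M Y y)) = 0"
    using XC \<alpha> dfun_in_unit_interval[OF M Y] \<open>j < d\<close> \<open>\<alpha> j = 0\<close>
    by (intro copula_grounded[of d C _ j]) (auto simp: has_copula_def le_less)
  ultimately show ?thesis by (metis Int_empty_left measure_empty)
qed

theorem lemma3p2:
  fixes M :: "'a measure" and X :: "nat \<Rightarrow> 'a \<Rightarrow> real" and Y :: "'a \<Rightarrow> real"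
    and N :: "'b measure" and U :: "nat \<Rightarrow> 'b \<Rightarrow> real" and V :: "'b \<Rightarrow> real"
    and C :: "(nat \<Rightarrow> real) \<Rightarrow> real" and d :: nat and \<alpha> :: "nat \<Rightarrow> real"
  assumes d: "d \<ge> 1"
    and M: "prob_space M"
    and Xrv: "\<forall>i<d. X i \<in> borel_measurable M" and Yrv: "Y \<in> borel_measurable M"
    and Xcont: "\<forall>i<d. continuous_on UNIV (dfun M (X i))"
    and Ycont: "continuous_on UNIV (dfun M Y)"
    and XC: "has_copula M d X Y C"
    and N: "prob_space N"
    and Urv: "\<forall>i<d. U i \<in> borel_measurable N" and Vrv: "V \<in> borel_measurable N"
    and Uunif: "\<forall>i<d. distr N borel (U i) = uniform_measure lborel {0..1}"
    and Vunif: "distr N borel V = uniform_measure lborel {0..1}"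
    and UC: "has_copula N d U V C"
    and \<alpha>: "\<forall>i<d. \<alpha> i \<in> {0..<1}"
    and C1: "C (\<alpha>(d := 1)) < 1"
  defines "AU \<equiv> {\<omega> \<in> space N. \<exists>i<d. U i \<omega> > \<alpha> i}"
    and "AX \<equiv> {\<omega> \<in> space M. \<exists>i<d. ereal (X i \<omega>) > VaR M (X i) (\<alpha> i)}"
  shows "(\<forall>v\<in>{0..1}. cond_dfun N AU V v = (v - C (\<alpha>(d := v))) / (1 - C (\<alpha>(d := 1))))
       \<and> distortion (\<lambda>v. (v - C (\<alpha>(d := v))) / (1 - C (\<alpha>(d := 1))))
       \<and> (\<forall>y. cond_dfun M AX Y y = cond_dfun N AU V (dfun M Y y))"
proof -
  note [measurable] = Urv[rule_format] Xrv[rule_format]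
  have copula: "is_copula d C" using UC unfolding has_copula_def by blast
  have \<alpha>_unit: "\<forall>i\<le>d. i \<noteq> d \<longrightarrow> \<alpha> i \<in> {0..1}" using \<alpha> by (auto simp: le_less)
  have g: "continuous_on {0..1} (\<lambda>t. C (\<alpha>(d := t)))"
    by (rule continuous_on_copula_coord[OF copula order.refl \<alpha>_unit])
  have AU_eq: "AU = space N - {\<omega>\<in>space N. \<forall>i<d. U i \<omega> \<le> \<alpha> i}"
    unfolding AU_def by (auto simp: not_le)
  have "cond_dfun N AU V v = (dfun N V v - C (\<alpha>(d := dfun N V v))) / (1 - C (\<alpha>(d := 1)))" for v
    unfolding AU_eq using Uunif \<alpha> by (intro cond_dfun_compl[OF N Vrv _ g] has_copula_measure_below[OF N Vrv UC])
      (auto simp: dfun_uniform)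
  then have A: "\<forall>v\<in>{0..1}. cond_dfun N AU V v = (v - C (\<alpha>(d := v))) / (1 - C (\<alpha>(d := 1)))"
    using dfun_uniform[OF Vunif] by simp
  have AX_eq: "AX = space M - {\<omega>\<in>space M. \<forall>i<d. ereal (X i \<omega>) \<le> VaR M (X i) (\<alpha> i)}"
    unfolding AX_def by (auto simp: not_le)
  have "cond_dfun M AX Y y = (dfun M Y y - C (\<alpha>(d := dfun M Y y))) / (1 - C (\<alpha>(d := 1)))" for y
    unfolding AX_eq by (intro cond_dfun_compl[OF M Yrv _ g] has_copula_measure_below_VaR[OF M Xrv Yrv Xcont XC \<alpha>])
      simp_all
  then have B: "\<forall>y. cond_dfun M AX Y y = cond_dfun N AU V (dfun M Y y)"
    using A dfun_in_unit_interval[OF M Yrv] by simp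
  show ?thesis
    using A B distortion_copula_coord[OF copula order.refl \<alpha>_unit C1] by blast
qed

end
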